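(* Let $D\subset\mathbb R^d$ be an open set, $\alpha\in(0,1)$, $2\alpha<d$, and let $u$ be a nonnegative bounded function on $D$, extended by $0$ to $\mathbb R^d\setminus D$, which is finely continuous with respect to $(\Delta^\alpha)_{|D}$. Then $u(x)=\lim_{r\to0^+}I^{(\alpha)}_ru(x)$ for every $x\in D$.
   Context: $(\Delta^\alpha)_{|D}$ is the Dirichlet fractional Laplacian on $D$, associated with the isotropic $2\alpha$-stable process killed on exiting $D$; its fine topology is the smallest topology making all its excessive functions continuous. $I^{(\alpha)}_ru(x)=\int_{\mathbb R^d\setminus B(x,r)}P_r(x,y)u(y)\,dy$, where $P_r(x,y)=c_{d,\alpha}\Big(\frac{r^2}{|y-x|^2-r^2}\Big)^{\alpha}\frac{1}{|y-x|^d}$, $c_{d,\alpha}=\Gamma(d/2)\pi^{-d/2-1}\sin(\pi\alpha)$, is the Poisson kernel of the ball $B(x,r)$ for the $2\alpha$-stable process, so that $I_r^{(\alpha)}u(x)=E_x u(X_{\tau_{B(x,r)}})$. *)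

theory Defs
  imports "HOL-Analysis.Analysis"
begin

text \<open>The constant c_{d,alpha} and the Poisson kernel P_r(x,y) of the ball B(x,r)
  for the isotropic 2alpha-stable process in the Euclidean space 'a of dimension d = DIM('a).\<close>

definition stable_const :: "real \<Rightarrow> nat \<Rightarrow> real" where
  "stable_const \<alpha> d = Gamma (real d / 2) * pi powr (- real d / 2 - 1) * sin (pi * \<alpha>)"

definition poisson_kernel :: "real \<Rightarrow> real \<Rightarrow> 'a::euclidean_space \<Rightarrow> 'a \<Rightarrow> real" where
  "poisson_kernel \<alpha> r x y =
     stable_const \<alpha> DIM('a) * (r\<^sup>2 / ((norm (y - x))\<^sup>2 - r\<^sup>2)) powr \<alpha> * (1 / norm (y - x) ^ DIM('a))"

text \<open>I_r^{(alpha)} u (x) = integral over R^d minus B(x,r) of P_r(x,y) u(y) dy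
  (as a nonnegative integral; used only for nonnegative u).\<close>

definition I_alpha :: "real \<Rightarrow> real \<Rightarrow> ('a::euclidean_space \<Rightarrow> real) \<Rightarrow> 'a \<Rightarrow> ennreal" where
  "I_alpha \<alpha> r u x =
     (\<integral>\<^sup>+ y. indicator (- ball x r) y * ennreal (poisson_kernel \<alpha> r x y * u y) \<partial>lebesgue)"

definition lsc_on :: "'a::topological_space set \<Rightarrow> ('a \<Rightarrow> real) \<Rightarrow> bool" where
  "lsc_on D u \<longleftrightarrow> (\<forall>x\<in>D. \<forall>c. c < u x \<longrightarrow> eventually (\<lambda>y. c < u y) (at x))"

text \<open>(Finite) excessive functions of the 2alpha-stable process killed on exiting D,
  i.e. of the Dirichlet fractional Laplacian on D: nonnegative alpha-superharmonic
  functions on D, extended by 0 outside D.\<close>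

definition excessive_killed :: "real \<Rightarrow> 'a::euclidean_space set \<Rightarrow> ('a \<Rightarrow> real) \<Rightarrow> bool" where
  "excessive_killed \<alpha> D f \<longleftrightarrow>
     (\<forall>y. 0 \<le> f y) \<and> (\<forall>y. y \<notin> D \<longrightarrow> f y = 0) \<and> lsc_on D f \<and>
     (\<forall>x\<in>D. \<forall>r>0. cball x r \<subseteq> D \<longrightarrow> I_alpha \<alpha> r f x \<le> ennreal (f x))"

definition fine_topology :: "real \<Rightarrow> 'a::euclidean_space set \<Rightarrow> 'a topology" where
  "fine_topology \<alpha> D =
     subtopology (topology_generated_by
        {f -` U | f U. excessive_killed \<alpha> D f \<and> open U}) D"

definition finely_continuous :: "real \<Rightarrow> 'a::euclidean_space set \<Rightarrow> ('a \<Rightarrow> real) \<Rightarrow> bool" where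
  "finely_continuous \<alpha> D u \<longleftrightarrow> continuous_map (fine_topology \<alpha> D) euclideanreal u"

end

theory Submission
  imports Defs "HOL-Probability.Probability_Measure"
begin

text \<open>The measure with density P_r(x,.) outside B(x,r) is the exit distribution of the
  process from B(x,r).  It is a probability measure: in polar coordinates its mass becomes a
  Beta(1 - alpha, alpha) integral, and c_{d,alpha} is exactly the normalising constant.  Its mass
  outside B(x,rho) is O(r^(2 alpha)), so it concentrates at x; call a set exit-negligible at x if
  its exit probability tends to 0 as r tends to 0.  For an excessive f, lower semicontinuity makes
  {f <= f(x) - delta} exit-negligible, and the super-mean-value inequality I_r f(x) <= f(x) makes
  {f >= f(x) + delta} exit-negligible by a Chebyshev-type estimate.  Sets with exit-negligible
  complement are stable under finite intersections and contain small balls, so every fine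
  neighbourhood of x contains one.  Fine continuity of u thus puts u within epsilon of u(x) off an
  exit-negligible set, where the boundedness of u controls the integral.\<close>

section \<open>Step functions and a Chebyshev-type bound\<close>

lemma (in finite_measure) nn_integral_indicator_combination:
  assumes "S1 \<in> sets M" "S2 \<in> sets M" "0 \<le> c1" "0 \<le> c2"
  shows "(\<integral>\<^sup>+ y. ennreal (c1 * indicator S1 y + c2 * indicator S2 y) \<partial>M)
    = ennreal (c1 * measure M S1 + c2 * measure M S2)"
proof -
  have "(\<integral>\<^sup>+ y. ennreal (c1 * indicator S1 y + c2 * indicator S2 y) \<partial>M)
      = (\<integral>\<^sup>+ y. ennreal c1 * indicator S1 y + ennreal c2 * indicator S2 y \<partial>M)"
    using assms by (intro nn_integral_cong) (auto simp: indicator_def ennreal_plus)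
  also have "\<dots> = ennreal c1 * emeasure M S1 + ennreal c2 * emeasure M S2"
    using assms by (subst nn_integral_add) (auto simp: nn_integral_cmult_indicator)
  also have "\<dots> = ennreal (c1 * measure M S1 + c2 * measure M S2)"
    using assms by (simp add: emeasure_eq_measure ennreal_mult ennreal_plus)
  finally show ?thesis .
qed

lemma (in prob_space) prob_upper_level_set_le:
  fixes f :: "'a \<Rightarrow> real"
  assumes [measurable]: "f \<in> borel_measurable M" and f: "\<And>y. 0 \<le> f y"
    and mean: "(\<integral>\<^sup>+ y. ennreal (f y) \<partial>M) \<le> ennreal c"
    and B: "B \<in> events" "\<And>y. y \<in> B \<Longrightarrow> c - \<eta> < f y"
    and c: "0 \<le> c" and \<delta>: "0 < \<delta>" and \<eta>: "0 \<le> \<eta>"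
  shows "prob {y \<in> space M. c + \<delta> \<le> f y} \<le> (\<eta> + c * prob (space M - B)) / \<delta> + prob (space M - B)"
proof -
  define A where "A = {y \<in> space M. c + \<delta> \<le> f y}"
  define k where "k = max 0 (c - \<eta>)"
  define q where "q = prob (space M - B)"
  have A: "A \<in> events" unfolding A_def by measurable
  have below: "k * indicator B y + \<delta> * indicator (A \<inter> B) y \<le> f y" if "y \<in> space M" for y
  proof (cases "y \<in> B")
    case True
    then have "k \<le> f y" using B(2)[OF True] f[of y] unfolding k_def by linarith
    moreover have "k + \<delta> \<le> f y" if "y \<in> A" using that c \<eta> unfolding k_def A_def by auto
    ultimately show ?thesis using True by (auto simp: indicator_def)
  qed (use f in \<open>auto simp: indicator_def\<close>)
  have "(\<integral>\<^sup>+ y. ennreal (k * indicator B y + \<delta> * indicator (A \<inter> B) y) \<partial>M) \<le> (\<integral>\<^sup>+ y. ennreal (f y) \<partial>M)"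
    using below by (intro nn_integral_mono ennreal_leI)
  also note mean
  finally have "ennreal (k * prob B + \<delta> * prob (A \<inter> B)) \<le> ennreal c"
    using \<delta> A B(1) by (subst (asm) nn_integral_indicator_combination) (auto simp: k_def)
  then have "k * (1 - q) + \<delta> * prob (A \<inter> B) \<le> c"
    using prob_compl[OF B(1)] c by (simp add: q_def ennreal_le_iff)
  moreover have "(c - \<eta>) * (1 - q) \<le> k * (1 - q)"
    unfolding k_def q_def by (intro mult_right_mono) auto
  moreover have "0 \<le> \<eta> * q" unfolding q_def using \<eta> by simp
  ultimately have "\<delta> * prob (A \<inter> B) \<le> \<eta> + c * q" by (simp add: algebra_simps)
  then have "prob (A \<inter> B) \<le> (\<eta> + c * q) / \<delta>" using \<delta> by (simp add: field_simps)
  moreover have "prob A \<le> prob (A \<inter> B) + q"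
    unfolding q_def by (rule order.trans[OF finite_measure_mono measure_Un_le]) (use A B(1) in \<open>auto simp: A_def\<close>)
  ultimately show ?thesis unfolding A_def q_def by linarith
qed

section \<open>A radial integral\<close>

lemma Beta_reflection:
  fixes a :: real
  assumes "0 < a" "a < 1"
  shows "Beta (1 - a) a = pi / sin (pi * a)"
proof -
  have "Gamma (complex_of_real a) * Gamma (1 - complex_of_real a) = of_real pi / sin (of_real pi * of_real a)"
    by (rule Gamma_reflection_complex)
  also have "Gamma (complex_of_real a) * Gamma (1 - complex_of_real a) = of_real (Gamma a * Gamma (1 - a))"
    by (simp flip: Gamma_complex_of_real)
  also have "of_real pi / sin (of_real pi * of_real a) = complex_of_real (pi / sin (pi * a))"
    by (simp flip: sin_of_real)
  finally have "Gamma a * Gamma (1 - a) = pi / sin (pi * a)"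
    using of_real_eq_iff by blast
  then show ?thesis
    unfolding Beta_def by (simp add: mult.commute)
qed

text \<open>The substitution t = 1 - r^2/s^2 turns the Beta(1 - a, a) integrand into the radial
  profile of the Poisson kernel.\<close>

lemma Beta_integrand_substitution:
  fixes r s a :: real
  assumes "0 < r" "r < s"
  shows "\<bar>2 * r\<^sup>2 / s ^ 3\<bar> * ((1 - r\<^sup>2 / s\<^sup>2) powr (1 - a - 1) * (1 - (1 - r\<^sup>2 / s\<^sup>2)) powr (a - 1))
         = 2 * ((r\<^sup>2 / (s\<^sup>2 - r\<^sup>2)) powr a / s)"
proof -
  define p where "p = r\<^sup>2 / s\<^sup>2"
  have s: "s > 0" using assms by linarith
  have r2: "r\<^sup>2 < s\<^sup>2" using assms by (simp add: power_strict_mono)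
  have p: "0 < p" "p < 1" using assms r2 s unfolding p_def by auto
  have q: "r\<^sup>2 / (s\<^sup>2 - r\<^sup>2) = p / (1 - p)"
    unfolding p_def using s r2 by (simp add: field_simps)
  have "(1 - p) powr (1 - a - 1) * p powr (a - 1) = (p / (1 - p)) powr a / p"
    using p by (simp add: powr_diff powr_minus powr_divide field_simps)
  moreover have "\<bar>2 * r\<^sup>2 / s ^ 3\<bar> = 2 * p / s"
    unfolding p_def using s by (simp add: power3_eq_cube power2_eq_square)
  ultimately show ?thesis
    using p s unfolding q p_def by (simp add: field_simps power2_eq_square power3_eq_cube)
qed

lemma one_minus_sq_ratio_image:
  fixes r :: real
  assumes r: "0 < r"
  shows "(\<lambda>s. 1 - r\<^sup>2 / s\<^sup>2) ` {r<..} = {0<..<1}"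
proof (intro equalityI subsetI)
  fix t assume "t \<in> (\<lambda>s. 1 - r\<^sup>2 / s\<^sup>2) ` {r<..}"
  then obtain s where s: "s > r" "t = 1 - r\<^sup>2 / s\<^sup>2" by auto
  have "r\<^sup>2 < s\<^sup>2" using s r by (simp add: power_strict_mono)
  then show "t \<in> {0<..<1}" using s r by auto
next
  fix t :: real assume t: "t \<in> {0<..<1}"
  define s where "s = r / sqrt (1 - t)"
  have st: "sqrt (1 - t) > 0" "sqrt (1 - t) < 1" using t by auto
  have "r * sqrt (1 - t) < r * 1" using st r by (intro mult_strict_left_mono) auto
  then have "s > r" unfolding s_def using st by (simp add: less_divide_eq)
  moreover have "s\<^sup>2 = r\<^sup>2 / (1 - t)" unfolding s_def using t by (simp add: power_divide)
  then have "1 - r\<^sup>2 / s\<^sup>2 = t" using t r by simp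
  ultimately show "t \<in> (\<lambda>s. 1 - r\<^sup>2 / s\<^sup>2) ` {r<..}" by force
qed

lemma has_integral_poisson_profile:
  fixes a r :: real
  assumes a: "0 < a" "a < 1" and r: "0 < r"
  shows "((\<lambda>s. (r\<^sup>2 / (s\<^sup>2 - r\<^sup>2)) powr a / s) has_integral (pi / (2 * sin (pi * a)))) {r<..}"
proof -
  define g where "g s = 1 - r\<^sup>2 / s\<^sup>2" for s :: real
  define g' where "g' s = 2 * r\<^sup>2 / s ^ 3" for s :: real
  define f where "f t = t powr (1 - a - 1) * (1 - t) powr (a - 1)" for t :: real
  have img: "g ` {r<..} = {0<..<1}" unfolding g_def by (rule one_minus_sq_ratio_image[OF r])
  have der: "(g has_field_derivative g' s) (at s within {r<..})" if "s \<in> {r<..}" for s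
  proof -
    have "s \<noteq> 0" using that r by auto
    then have "((\<lambda>z. 1 - r\<^sup>2 / z\<^sup>2) has_real_derivative
        0 - (0 * s\<^sup>2 - r\<^sup>2 * (real 2 * s ^ (2 - Suc 0))) / (s\<^sup>2 * s\<^sup>2)) (at s)"
      by (intro DERIV_diff DERIV_const DERIV_divide DERIV_pow) simp
    moreover have "0 - (0 * s\<^sup>2 - r\<^sup>2 * (real 2 * s ^ (2 - Suc 0))) / (s\<^sup>2 * s\<^sup>2) = g' s"
      using \<open>s \<noteq> 0\<close> unfolding g'_def by (simp add: field_simps power2_eq_square power3_eq_cube)
    ultimately show ?thesis unfolding g_def by (metis has_field_derivative_at_within)
  qed
  have inj: "inj_on g {r<..}"
  proof
    fix x y assume "x \<in> {r<..}" "y \<in> {r<..}" "g x = g y"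
    then have "x\<^sup>2 = y\<^sup>2" "x > 0" "y > 0" using r unfolding g_def by (auto simp: field_simps)
    then show "x = y" by (simp add: power2_eq_iff_nonneg)
  qed
  have B: "(f has_integral Beta (1 - a) a) {0<..<1}"
    using has_integral_Beta_real[of "1 - a" a] a unfolding f_def by (simp add: has_integral_Icc_iff_Ioo)
  have "f absolutely_integrable_on {0<..<1}"
    by (rule nonnegative_absolutely_integrable_1) (use B in \<open>auto simp: f_def has_integral_integrable\<close>)
  then have "(\<lambda>s. \<bar>g' s\<bar> * f (g s)) absolutely_integrable_on {r<..} \<and>
        integral {r<..} (\<lambda>s. \<bar>g' s\<bar> * f (g s)) = Beta (1 - a) a"
    using has_absolute_integral_change_of_variables_1'[of "{r<..}" g g' f "Beta (1 - a) a"] der inj B img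
    by (auto simp: integral_unique)
  then have H: "((\<lambda>s. \<bar>g' s\<bar> * f (g s)) has_integral Beta (1 - a) a) {r<..}"
    using absolutely_integrable_on_def has_integral_integrable_integral by blast
  have "\<bar>g' s\<bar> * f (g s) = 2 * ((r\<^sup>2 / (s\<^sup>2 - r\<^sup>2)) powr a / s)" if "s \<in> {r<..}" for s
    using Beta_integrand_substitution[of r s a] that r unfolding g_def g'_def f_def by auto
  then have "((\<lambda>s. 2 * ((r\<^sup>2 / (s\<^sup>2 - r\<^sup>2)) powr a / s)) has_integral Beta (1 - a) a) {r<..}"
    using has_integral_spike_finite[OF _ _ H, of "{}"] by auto
  from has_integral_mult_right[OF this, of "1/2"] show ?thesis
    using Beta_reflection[OF a] by simp
qed

section \<open>Polar coordinates\<close>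

lemma nn_integral_unit_ball_vol_deriv:
  fixes n :: nat and a :: real
  assumes "n \<ge> 1" "a \<le> 0"
  shows "(\<integral>\<^sup>+ s. ennreal (n * unit_ball_vol n * (- s) ^ (n - 1)) * indicator {a..0} s \<partial>lborel)
    = ennreal (unit_ball_vol n * (- a) ^ n)"
proof -
  have "(\<integral>\<^sup>+ s. ennreal (n * unit_ball_vol n * (- s) ^ (n - 1)) * indicator {a..0} s \<partial>lborel)
      = ennreal ((- unit_ball_vol n * (- 0) ^ n) - (- unit_ball_vol n * (- a) ^ n))"
  proof (rule nn_integral_FTC_Icc)
    fix s :: real
    have "((\<lambda>s. - unit_ball_vol n * (- s) ^ n) has_real_derivative
        - unit_ball_vol n * (real n * ((- 1) * (- s) ^ (n - Suc 0)))) (at s)"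
      by (intro DERIV_cmult DERIV_power DERIV_minus DERIV_ident)
    then show "((\<lambda>s. - unit_ball_vol n * (- s) ^ n) has_real_derivative
        n * unit_ball_vol n * (- s) ^ (n - 1)) (at s)" by (simp add: mult_ac)
    assume "s \<in> {a..0}"
    then show "0 \<le> n * unit_ball_vol n * (- s) ^ (n - 1)" by simp
  qed (use assms in auto)
  then show ?thesis using assms by simp
qed

lemma distr_neg_norm_lborel:
  defines "n \<equiv> DIM('a::euclidean_space)"
  shows "distr (lborel::'a measure) borel (\<lambda>z. - norm z) =
    density lborel (\<lambda>s. ennreal (n * unit_ball_vol n * (- s) ^ (n - 1)) * indicator {..<0} s)"
    (is "?N = ?Q")
proof (rule measure_eqI_lessThan)
  show "sets ?N = sets borel" "sets ?Q = sets borel" by auto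
  have n: "n \<ge> 1" unfolding n_def by (simp add: DIM_positive Suc_leI)
  have N: "emeasure ?N {a<..} = (if a < 0 then ennreal (unit_ball_vol n * (- a) ^ n) else 0)" for a
  proof -
    have "emeasure ?N {a<..} = emeasure lborel ((\<lambda>z::'a. - norm z) -` {a<..})"
      by (subst emeasure_distr) auto
    also have "(\<lambda>z::'a. - norm z) -` {a<..} = ball 0 (- a)" by (auto simp: dist_norm)
    finally show ?thesis
      using emeasure_ball[of "- a" "0::'a"] by (auto simp: n_def ball_empty)
  qed
  then show "emeasure ?N {a<..} < \<infinity>" for a by simp
  show "emeasure ?N {a<..} = emeasure ?Q {a<..}" for a
  proof (cases "a < 0")
    case True
    have "emeasure ?Q {a<..} =
        (\<integral>\<^sup>+ s. ennreal (n * unit_ball_vol n * (- s) ^ (n - 1)) * indicator {..<0} s * indicator {a<..} s \<partial>lborel)"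
      by (subst emeasure_density) auto
    also have "\<dots> = (\<integral>\<^sup>+ s. ennreal (n * unit_ball_vol n * (- s) ^ (n - 1)) * indicator {a..0} s \<partial>lborel)"
    proof (rule nn_integral_cong_AE)
      have "AE s in lborel. s \<noteq> a" "AE s in lborel. s \<noteq> 0" by (rule AE_lborel_singleton)+
      then show "AE s in lborel. ennreal (n * unit_ball_vol n * (- s) ^ (n - 1)) * indicator {..<0} s * indicator {a<..} s =
          ennreal (n * unit_ball_vol n * (- s) ^ (n - 1)) * indicator {a..0} s"
        by eventually_elim (auto simp: indicator_def)
    qed
    also have "\<dots> = ennreal (unit_ball_vol n * (- a) ^ n)"
      using n True by (intro nn_integral_unit_ball_vol_deriv) auto
    finally show ?thesis using N True by simp
  next
    case False
    have "emeasure ?Q {a<..} =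
        (\<integral>\<^sup>+ s. ennreal (n * unit_ball_vol n * (- s) ^ (n - 1)) * indicator {..<0} s * indicator {a<..} s \<partial>lborel)"
      by (subst emeasure_density) auto
    also have "\<dots> = (\<integral>\<^sup>+ s. 0 \<partial>(lborel::real measure))"
      using False by (intro nn_integral_cong) (auto simp: indicator_def)
    finally show ?thesis using N False by simp
  qed
qed

lemma nn_integral_lborel_radial:
  fixes h :: "real \<Rightarrow> ennreal"
  assumes [measurable]: "h \<in> borel_measurable borel"
  defines "n \<equiv> DIM('a::euclidean_space)"
  shows "(\<integral>\<^sup>+ z. h (norm z) \<partial>(lborel::'a measure)) =
    (\<integral>\<^sup>+ s. ennreal (n * unit_ball_vol n * s ^ (n - 1)) * indicator {0<..} s * h s \<partial>lborel)"
proof -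
  have "(\<integral>\<^sup>+ z. h (norm z) \<partial>(lborel::'a measure)) =
      (\<integral>\<^sup>+ s. h (- s) \<partial>distr (lborel::'a measure) borel (\<lambda>z. - norm z))"
    by (subst nn_integral_distr) auto
  also have "\<dots> = (\<integral>\<^sup>+ s. ennreal (n * unit_ball_vol n * (- s) ^ (n - 1)) * indicator {..<0} s * h (- s) \<partial>lborel)"
    unfolding distr_neg_norm_lborel n_def by (subst nn_integral_density) auto
  also have "\<dots> = (\<integral>\<^sup>+ s. ennreal (n * unit_ball_vol n * (- s) ^ (n - 1)) * indicator {..<0} s * h (- s)
      \<partial>distr lborel borel uminus)"
    by (simp add: lborel_distr_uminus)
  also have "\<dots> = (\<integral>\<^sup>+ s. ennreal (n * unit_ball_vol n * s ^ (n - 1)) * indicator {0<..} s * h s \<partial>lborel)"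
    by (subst nn_integral_distr) (auto intro!: nn_integral_cong simp: indicator_def)
  finally show ?thesis .
qed

lemma nn_integral_lborel_translate:
  fixes x :: "'a::euclidean_space" and G :: "'a \<Rightarrow> ennreal"
  assumes [measurable]: "G \<in> borel_measurable borel"
  shows "(\<integral>\<^sup>+ y. G (y - x) \<partial>lborel) = (\<integral>\<^sup>+ z. G z \<partial>lborel)"
proof -
  have "(\<integral>\<^sup>+ y. G (y - x) \<partial>lborel) = (\<integral>\<^sup>+ y. G (y - x) \<partial>distr lborel borel ((+) x))"
    by (simp add: lborel_distr_plus)
  then show ?thesis by (subst (asm) nn_integral_distr) auto
qed

section \<open>The exit distribution from a ball\<close>

lemma stable_const_pos:
  assumes "0 < \<alpha>" "\<alpha> < 1" "n \<ge> 1"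
  shows "stable_const \<alpha> n > 0"
  unfolding stable_const_def using assms by (intro mult_pos_pos Gamma_real_pos sin_gt_zero) auto

lemma poisson_kernel_nonneg:
  assumes "0 < \<alpha>" "\<alpha> < 1"
  shows "0 \<le> poisson_kernel \<alpha> r x (y::'a::euclidean_space)"
  unfolding poisson_kernel_def using stable_const_pos[OF assms, of "DIM('a)"]
  by (intro mult_nonneg_nonneg) (auto simp: DIM_positive Suc_leI)

lemma poisson_kernel_measurable [measurable]:
  "poisson_kernel \<alpha> r x \<in> borel_measurable (borel :: 'a::euclidean_space measure)"
  unfolding poisson_kernel_def by measurable

text \<open>d times the volume of the unit ball is the area of the unit sphere, and
  pi / (2 sin(pi alpha)) is the radial integral of the kernel.\<close>

lemma stable_const_normalization:
  assumes "0 < \<alpha>" "\<alpha> < 1" "n \<ge> 1"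
  shows "stable_const \<alpha> n * (real n * unit_ball_vol n) * (pi / (2 * sin (pi * \<alpha>))) = 1"
proof -
  have s: "sin (pi * \<alpha>) > 0" using assms by (intro sin_gt_zero) auto
  have "real n / 2 \<notin> \<int>\<^sub>\<le>\<^sub>0" using assms nonpos_Ints_nonpos by fastforce
  then have G: "Gamma (real n / 2 + 1) = real n / 2 * Gamma (real n / 2)" by (rule Gamma_plus1)
  have "Gamma (real n / 2) > 0" by (rule Gamma_real_pos) (use assms in simp)
  then have "Gamma (real n / 2) \<noteq> 0" by linarith
  moreover have "pi powr (- real n / 2 - 1) * pi powr (real n / 2) * pi = 1"
    by (simp flip: powr_add)
  ultimately show ?thesis
    using s assms unfolding stable_const_def unit_ball_vol_def G by (simp add: field_simps)
qed

definition poisson_measure :: "real \<Rightarrow> real \<Rightarrow> 'a::euclidean_space \<Rightarrow> 'a measure" where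
  "poisson_measure \<alpha> r x = density lborel (\<lambda>y. indicator (- ball x r) y * ennreal (poisson_kernel \<alpha> r x y))"

lemma space_poisson_measure [simp]: "space (poisson_measure \<alpha> r x) = UNIV"
  and sets_poisson_measure [simp]: "sets (poisson_measure \<alpha> r x) = sets borel"
  unfolding poisson_measure_def by auto

lemma nn_integral_poisson_kernel_radial:
  fixes x :: "'a::euclidean_space" and G :: "real \<Rightarrow> ennreal"
  assumes [measurable]: "G \<in> borel_measurable borel" and r: "0 < r"
  defines "n \<equiv> DIM('a)"
  shows "(\<integral>\<^sup>+ y. indicator (- ball x r) y * ennreal (poisson_kernel \<alpha> r x y) * G (norm (y - x)) \<partial>lborel)
    = (\<integral>\<^sup>+ s. ennreal (stable_const \<alpha> n * (real n * unit_ball_vol n)) *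
          (indicator {r<..} s * ennreal ((r\<^sup>2 / (s\<^sup>2 - r\<^sup>2)) powr \<alpha> / s)) * G s \<partial>lborel)"
proof -
  define H where "H s = indicator {r..} s * ennreal (stable_const \<alpha> n * (r\<^sup>2 / (s\<^sup>2 - r\<^sup>2)) powr \<alpha> * (1 / s ^ n)) * G s"
    for s
  have [measurable]: "H \<in> borel_measurable borel" unfolding H_def by measurable
  have "(\<integral>\<^sup>+ y. indicator (- ball x r) y * ennreal (poisson_kernel \<alpha> r x y) * G (norm (y - x)) \<partial>lborel)
      = (\<integral>\<^sup>+ y. H (norm (y - x)) \<partial>lborel)"
    by (intro nn_integral_cong)
       (auto simp: H_def poisson_kernel_def indicator_def dist_norm norm_minus_commute n_def)
  also have "\<dots> = (\<integral>\<^sup>+ z. H (norm z) \<partial>(lborel::'a measure))"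
    by (rule nn_integral_lborel_translate[where G = "\<lambda>z. H (norm z)"]) measurable
  also have "\<dots> = (\<integral>\<^sup>+ s. ennreal (real n * unit_ball_vol n * s ^ (n - 1)) * indicator {0<..} s * H s \<partial>lborel)"
    unfolding n_def by (rule nn_integral_lborel_radial) measurable
  also have "\<dots> = (\<integral>\<^sup>+ s. ennreal (stable_const \<alpha> n * (real n * unit_ball_vol n)) *
          (indicator {r<..} s * ennreal ((r\<^sup>2 / (s\<^sup>2 - r\<^sup>2)) powr \<alpha> / s)) * G s \<partial>lborel)"
  proof (intro nn_integral_cong)
    fix s :: real
    show "ennreal (real n * unit_ball_vol n * s ^ (n - 1)) * indicator {0<..} s * H s =
      ennreal (stable_const \<alpha> n * (real n * unit_ball_vol n)) *
          (indicator {r<..} s * ennreal ((r\<^sup>2 / (s\<^sup>2 - r\<^sup>2)) powr \<alpha> / s)) * G s"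
    proof (cases "r < s")
      case True
      then have s: "s > 0" using r by linarith
      have "n \<ge> 1" unfolding n_def by (simp add: DIM_positive Suc_leI)
      then have "s ^ n = s ^ (n - 1) * s" by (metis Suc_diff_1 less_le_trans zero_less_one power_Suc2)
      then have "real n * unit_ball_vol n * s ^ (n - 1) * (stable_const \<alpha> n * (r\<^sup>2 / (s\<^sup>2 - r\<^sup>2)) powr \<alpha> * (1 / s ^ n))
          = stable_const \<alpha> n * (real n * unit_ball_vol n) * ((r\<^sup>2 / (s\<^sup>2 - r\<^sup>2)) powr \<alpha> / s)"
        using s by (simp add: field_simps)
      then show ?thesis
        using True s unfolding H_def by (simp add: mult_ac flip: ennreal_mult' ennreal_mult'')
    next
      case False
      then show ?thesis unfolding H_def by (cases "s = r") (auto simp: indicator_def)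
    qed
  qed
  finally show ?thesis .
qed

lemma prob_space_poisson_measure:
  fixes x :: "'a::euclidean_space"
  assumes \<alpha>: "0 < \<alpha>" "\<alpha> < 1" and r: "0 < r"
  shows "prob_space (poisson_measure \<alpha> r x)"
proof (rule prob_spaceI)
  define n where "n = DIM('a)"
  have n: "n \<ge> 1" unfolding n_def by (simp add: DIM_positive Suc_leI)
  have "emeasure (poisson_measure \<alpha> r x) UNIV =
      (\<integral>\<^sup>+ y. indicator (- ball x r) y * ennreal (poisson_kernel \<alpha> r x y) * (\<lambda>_. 1) (norm (y - x)) \<partial>lborel)"
    unfolding poisson_measure_def by (subst emeasure_density) auto
  also have "\<dots> = (\<integral>\<^sup>+ s. ennreal (stable_const \<alpha> n * (real n * unit_ball_vol n)) *
          (indicator {r<..} s * ennreal ((r\<^sup>2 / (s\<^sup>2 - r\<^sup>2)) powr \<alpha> / s)) \<partial>lborel)"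
    unfolding n_def by (subst nn_integral_poisson_kernel_radial[OF _ r]) auto
  also have "\<dots> = ennreal (stable_const \<alpha> n * (real n * unit_ball_vol n)) *
          (\<integral>\<^sup>+ s. ennreal (indicator {r<..} s * ((r\<^sup>2 / (s\<^sup>2 - r\<^sup>2)) powr \<alpha> / s)) \<partial>lborel)"
    by (subst nn_integral_cmult[symmetric]) (auto intro!: nn_integral_cong simp: indicator_def)
  also have "\<dots> = ennreal (stable_const \<alpha> n * (real n * unit_ball_vol n)) * ennreal (pi / (2 * sin (pi * \<alpha>)))"
    by (subst nn_integral_has_integral_lebesgue[OF _ has_integral_poisson_profile[OF \<alpha> r]]) (use r in auto)
  also have "\<dots> = 1"
    using stable_const_normalization[OF \<alpha> n] stable_const_pos[OF \<alpha> n] n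
    by (subst ennreal_mult[symmetric]) (auto simp: mult.assoc)
  finally show "emeasure (poisson_measure \<alpha> r x) (space (poisson_measure \<alpha> r x)) = 1" by simp
qed

lemma poisson_profile_le:
  fixes a r s :: real
  assumes a: "0 < a" and r: "0 < r" "2 * r \<le> s"
  shows "(r\<^sup>2 / (s\<^sup>2 - r\<^sup>2)) powr a / s \<le> (2 * r\<^sup>2) powr a * s powr (- 2 * a - 1)"
proof -
  have s: "s > 0" using r by linarith
  have "(2 * r)\<^sup>2 \<le> s\<^sup>2" using r by (intro power_mono) auto
  then have "4 * r\<^sup>2 \<le> s\<^sup>2" by (simp add: power_mult_distrib)
  then have half: "s\<^sup>2 / 2 \<le> s\<^sup>2 - r\<^sup>2" "0 < s\<^sup>2 / 2"
    using zero_le_power2[of r] s by (linarith, simp)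
  moreover have pos: "0 < s\<^sup>2 - r\<^sup>2" using half by linarith
  ultimately have "r\<^sup>2 / (s\<^sup>2 - r\<^sup>2) \<le> r\<^sup>2 / (s\<^sup>2 / 2)"
    by (intro divide_left_mono mult_pos_pos) auto
  also have "\<dots> = 2 * r\<^sup>2 / s\<^sup>2" by simp
  finally have "(r\<^sup>2 / (s\<^sup>2 - r\<^sup>2)) powr a \<le> (2 * r\<^sup>2 / s\<^sup>2) powr a"
    using a pos by (intro powr_mono2) auto
  also have "(2 * r\<^sup>2 / s\<^sup>2) powr a = (2 * r\<^sup>2) powr a * s powr (- 2 * a)"
    using s by (simp add: powr_divide powr_powr powr_minus_divide flip: powr_numeral)
  finally have "(r\<^sup>2 / (s\<^sup>2 - r\<^sup>2)) powr a / s \<le> (2 * r\<^sup>2) powr a * s powr (- 2 * a) / s"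
    using s by (simp add: divide_right_mono)
  also have "\<dots> = (2 * r\<^sup>2) powr a * s powr (- 2 * a - 1)"
    using s by (simp add: powr_diff)
  finally show ?thesis .
qed

lemma nn_integral_powr_tail:
  fixes b K \<rho> :: real
  assumes \<rho>: "0 < \<rho>" and b: "0 < b" and K: "0 \<le> K"
  shows "(\<integral>\<^sup>+ s. ennreal (K * s powr (- b - 1)) * indicator {\<rho>..} s \<partial>lborel) = ennreal (K * \<rho> powr (- b) / b)"
proof -
  have "(\<integral>\<^sup>+ s. ennreal (K * s powr (- b - 1)) * indicator {\<rho>..} s \<partial>lborel)
      = ennreal (0 - (- K * \<rho> powr (- b) / b))"
  proof (rule nn_integral_FTC_atLeast)
    fix s assume "\<rho> \<le> s"
    then have s: "s > 0" using \<rho> by linarith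
    show "0 \<le> K * s powr (- b - 1)" using K by simp
    have "((\<lambda>s. - K * s powr (- b) / b) has_real_derivative - K * ((- b) * s powr (- b - 1)) / b) (at s)"
      by (rule DERIV_cdivide[OF DERIV_cmult[OF has_real_derivative_powr[OF s]]])
    then show "((\<lambda>s. - K * s powr (- b) / b) has_real_derivative K * s powr (- b - 1)) (at s)"
      using b by simp
  next
    have "((\<lambda>s. s powr (- b)) \<longlongrightarrow> 0) at_top"
      using b by (intro tendsto_neg_powr filterlim_ident) auto
    from tendsto_mult_right_zero[OF this, of "- K / b"]
    show "((\<lambda>s. - K * s powr (- b) / b) \<longlongrightarrow> 0) at_top" by simp
  qed simp
  then show ?thesis by simp
qed

lemma emeasure_poisson_measure_outside_ball_le:
  fixes x :: "'a::euclidean_space"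
  assumes \<alpha>: "0 < \<alpha>" "\<alpha> < 1" and r: "0 < r" "2 * r \<le> \<rho>"
  defines "C \<equiv> stable_const \<alpha> DIM('a) * (real DIM('a) * unit_ball_vol DIM('a))"
  shows "emeasure (poisson_measure \<alpha> r x) (- ball x \<rho>) \<le> ennreal (C * (2 * r\<^sup>2) powr \<alpha> * \<rho> powr (- 2 * \<alpha>) / (2 * \<alpha>))"
proof -
  have "DIM('a) \<ge> 1" by (simp add: DIM_positive Suc_leI)
  then have C: "C > 0" unfolding C_def using stable_const_pos[OF \<alpha>] by simp
  have \<rho>: "\<rho> > 0" using r by linarith
  define K where "K = C * (2 * r\<^sup>2) powr \<alpha>"
  have K: "K \<ge> 0" unfolding K_def using C by simp
  have "emeasure (poisson_measure \<alpha> r x) (- ball x \<rho>) =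
      (\<integral>\<^sup>+ y. indicator (- ball x r) y * ennreal (poisson_kernel \<alpha> r x y) * indicator {\<rho>..} (norm (y - x)) \<partial>lborel)"
    unfolding poisson_measure_def
    by (subst emeasure_density) (auto intro!: nn_integral_cong simp: indicator_def dist_norm norm_minus_commute)
  also have "\<dots> = (\<integral>\<^sup>+ s. ennreal C *
          (indicator {r<..} s * ennreal ((r\<^sup>2 / (s\<^sup>2 - r\<^sup>2)) powr \<alpha> / s)) * indicator {\<rho>..} s \<partial>lborel)"
    unfolding C_def by (rule nn_integral_poisson_kernel_radial[OF _ r(1)]) simp
  also have "\<dots> \<le> (\<integral>\<^sup>+ s. ennreal (K * s powr (- 2 * \<alpha> - 1)) * indicator {\<rho>..} s \<partial>lborel)"
  proof (intro nn_integral_mono)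
    fix s :: real
    show "ennreal C * (indicator {r<..} s * ennreal ((r\<^sup>2 / (s\<^sup>2 - r\<^sup>2)) powr \<alpha> / s)) * indicator {\<rho>..} s
      \<le> ennreal (K * s powr (- 2 * \<alpha> - 1)) * indicator {\<rho>..} s"
    proof (cases "\<rho> \<le> s")
      case True
      then have "r < s" "2 * r \<le> s" using r by auto
      moreover have "C * ((r\<^sup>2 / (s\<^sup>2 - r\<^sup>2)) powr \<alpha> / s) \<le> K * s powr (- 2 * \<alpha> - 1)"
        unfolding K_def mult.assoc using poisson_profile_le[OF \<alpha>(1) r(1) \<open>2 * r \<le> s\<close>] C
        by (intro mult_left_mono) auto
      ultimately show ?thesis
        using True C by (auto simp: indicator_def intro!: ennreal_leI simp flip: ennreal_mult')
    qed (simp add: indicator_def)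
  qed
  also have "\<dots> = ennreal (K * \<rho> powr (- (2 * \<alpha>)) / (2 * \<alpha>))"
    using nn_integral_powr_tail[OF \<rho>, of "2 * \<alpha>" K] \<alpha> K by simp
  also have "\<dots> = ennreal (C * (2 * r\<^sup>2) powr \<alpha> * \<rho> powr (- 2 * \<alpha>) / (2 * \<alpha>))"
    unfolding K_def by simp
  finally show ?thesis .
qed

definition exit_negligible :: "real \<Rightarrow> 'a::euclidean_space \<Rightarrow> 'a set \<Rightarrow> bool" where
  "exit_negligible \<alpha> x A \<longleftrightarrow> ((\<lambda>r. measure (poisson_measure \<alpha> r x) A) \<longlongrightarrow> 0) (at_right 0)"

lemma exit_negligible_outside_ball:
  fixes x :: "'a::euclidean_space"
  assumes \<alpha>: "0 < \<alpha>" "\<alpha> < 1" and \<rho>: "0 < \<rho>"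
  shows "exit_negligible \<alpha> x (- ball x \<rho>)"
  unfolding exit_negligible_def
proof (rule tendsto_sandwich[where f = "\<lambda>_. 0"])
  define C where "C = stable_const \<alpha> DIM('a) * (real DIM('a) * unit_ball_vol DIM('a))"
  define B where "B r = C * (2 * r\<^sup>2) powr \<alpha> * \<rho> powr (- 2 * \<alpha>) / (2 * \<alpha>)" for r
  have "DIM('a) \<ge> 1" by (simp add: DIM_positive Suc_leI)
  then have C: "C > 0" unfolding C_def using stable_const_pos[OF \<alpha>] by simp
  have "\<forall>\<^sub>F r in at_right 0. r \<in> {0<..<\<rho>/2}" by (rule eventually_at_right_real) (use \<rho> in simp)
  then show "\<forall>\<^sub>F r in at_right 0. measure (poisson_measure \<alpha> r x) (- ball x \<rho>) \<le> B r"
  proof eventually_elim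
    case (elim r)
    then have r: "0 < r" "2 * r \<le> \<rho>" by auto
    show ?case unfolding measure_def B_def
      by (rule enn2real_leI) (use C \<alpha> emeasure_poisson_measure_outside_ball_le[OF \<alpha> r, of x] in \<open>auto simp: C_def\<close>)
  qed
  have "((\<lambda>r::real. 2 * r\<^sup>2) \<longlongrightarrow> 0) (at_right 0)"
    by (auto intro!: tendsto_eq_intros)
  then have "((\<lambda>r. (2 * r\<^sup>2) powr \<alpha>) \<longlongrightarrow> 0) (at_right (0::real))"
    by (rule tendsto_zero_powrI) (use \<alpha> in auto)
  then have "(B \<longlongrightarrow> C * 0 * \<rho> powr (- 2 * \<alpha>) / (2 * \<alpha>)) (at_right 0)"
    unfolding B_def by (intro tendsto_intros) (use \<alpha> in auto)
  then show "(B \<longlongrightarrow> 0) (at_right 0)" by simp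
qed auto

lemma exit_negligible_subset:
  assumes \<alpha>: "0 < \<alpha>" "\<alpha> < 1"
    and B: "exit_negligible \<alpha> x B" "B \<in> sets borel" and "A \<subseteq> B"
  shows "exit_negligible \<alpha> x A"
  unfolding exit_negligible_def
proof (rule tendsto_sandwich[OF _ _ tendsto_const B(1)[unfolded exit_negligible_def]])
  show "\<forall>\<^sub>F r in at_right 0. measure (poisson_measure \<alpha> r x) A \<le> measure (poisson_measure \<alpha> r x) B"
    using eventually_at_right_less[of 0]
  proof eventually_elim
    case (elim r)
    interpret prob_space "poisson_measure \<alpha> r x" by (rule prob_space_poisson_measure[OF \<alpha> elim])
    show ?case by (rule finite_measure_mono) (use B \<open>A \<subseteq> B\<close> in auto)
  qed
qed simp

lemma exit_negligible_Un:
  assumes "exit_negligible \<alpha> x A" "exit_negligible \<alpha> x B" "A \<in> sets borel" "B \<in> sets borel"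
  shows "exit_negligible \<alpha> x (A \<union> B)"
  unfolding exit_negligible_def
proof (rule tendsto_sandwich[OF _ _ tendsto_const])
  show "((\<lambda>r. measure (poisson_measure \<alpha> r x) A + measure (poisson_measure \<alpha> r x) B) \<longlongrightarrow> 0) (at_right 0)"
    using tendsto_add[OF assms(1,2)[unfolded exit_negligible_def]] by simp
qed (use assms(3,4) in \<open>auto intro!: always_eventually measure_Un_le\<close>)

text \<open>No measurability of u is needed: the nonnegative integral is monotone for arbitrary
  integrands, so u is only ever compared with Borel functions.\<close>

lemma I_alpha_mono:
  assumes \<alpha>: "0 < \<alpha>" "\<alpha> < 1" and le: "\<And>y. u y \<le> v y"
  shows "I_alpha \<alpha> r u x \<le> I_alpha \<alpha> r v (x::'a::euclidean_space)"
  unfolding I_alpha_def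
  using poisson_kernel_nonneg[OF \<alpha>, of r x]
  by (intro nn_integral_mono mult_left_mono ennreal_leI) (auto intro: le)

lemma I_alpha_eq_nn_integral_poisson_measure:
  assumes \<alpha>: "0 < \<alpha>" "\<alpha> < 1" and [measurable]: "g \<in> borel_measurable borel"
  shows "I_alpha \<alpha> r g x = (\<integral>\<^sup>+ y. ennreal (g y) \<partial>poisson_measure \<alpha> r (x::'a::euclidean_space))"
proof -
  have "I_alpha \<alpha> r g x = (\<integral>\<^sup>+ y. indicator (- ball x r) y * ennreal (poisson_kernel \<alpha> r x y * g y) \<partial>lborel)"
    unfolding I_alpha_def by (rule nn_integral_completion) measurable
  also have "\<dots> = (\<integral>\<^sup>+ y. indicator (- ball x r) y * ennreal (poisson_kernel \<alpha> r x y) * ennreal (g y) \<partial>lborel)"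
    using poisson_kernel_nonneg[OF \<alpha>, of r x] by (intro nn_integral_cong) (simp add: ennreal_mult' mult.assoc)
  also have "\<dots> = (\<integral>\<^sup>+ y. ennreal (g y) \<partial>poisson_measure \<alpha> r x)"
    unfolding poisson_measure_def by (subst nn_integral_density) auto
  finally show ?thesis .
qed

section \<open>Excessive functions and the fine topology\<close>

lemma lsc_on_ball_above:
  assumes "lsc_on D f" "x \<in> D" "c < f x"
  shows "\<exists>\<rho>>0. \<forall>y\<in>ball x \<rho>. c < f y"
proof -
  have "eventually (\<lambda>y. c < f y) (at x)" using assms unfolding lsc_on_def by blast
  then obtain \<rho> where \<rho>: "0 < \<rho>" "\<And>y. y \<noteq> x \<Longrightarrow> dist y x < \<rho> \<Longrightarrow> c < f y"
    unfolding eventually_at by auto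
  have "c < f y" if "y \<in> ball x \<rho>" for y
    using \<rho>(2)[of y] that assms(3) by (cases "y = x") (auto simp: dist_commute)
  with \<rho>(1) show ?thesis by blast
qed

lemma excessive_killed_borel_measurable:
  assumes D: "open D" and f: "excessive_killed \<alpha> D f"
  shows "f \<in> borel_measurable borel"
proof (rule borel_measurableI_greater)
  fix t
  have lsc: "lsc_on D f" and zero: "\<And>y. y \<notin> D \<Longrightarrow> f y = 0"
    using f unfolding excessive_killed_def by auto
  have "open {y \<in> D. t < f y}"
    unfolding open_contains_ball
  proof
    fix y assume "y \<in> {y \<in> D. t < f y}"
    then have y: "y \<in> D" "t < f y" by auto
    obtain \<rho> where \<rho>: "0 < \<rho>" "\<forall>z\<in>ball y \<rho>. t < f z"
      using lsc_on_ball_above[OF lsc y] by blast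
    obtain \<epsilon> where \<epsilon>: "0 < \<epsilon>" "ball y \<epsilon> \<subseteq> D" using D y(1) openE by blast
    have "ball y (min \<rho> \<epsilon>) \<subseteq> {y \<in> D. t < f y}" using \<rho>(2) \<epsilon>(2) by auto
    then show "\<exists>e>0. ball y e \<subseteq> {y \<in> D. t < f y}" using \<rho>(1) \<epsilon>(1) by (intro exI[of _ "min \<rho> \<epsilon>"]) simp
  qed
  moreover have "y \<in> D" if "t < f y" "\<not> t < 0" for y
    using zero[of y] that by fastforce
  then have "{y. t < f y} = {y \<in> D. t < f y} \<union> (if t < 0 then - D else {})"
    using zero by auto
  ultimately show "{y \<in> space borel. t < f y} \<in> sets borel"
    using D by (cases "t < 0") auto
qed

lemma excessive_exit_negligible_upper_level:
  fixes x :: "'a::euclidean_space"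
  assumes \<alpha>: "0 < \<alpha>" "\<alpha> < 1" and D: "open D" and f: "excessive_killed \<alpha> D f"
    and x: "x \<in> D" and \<delta>: "0 < \<delta>"
  shows "exit_negligible \<alpha> x {y. f x + \<delta> \<le> f y}"
  unfolding exit_negligible_def
proof (rule tendstoI)
  fix e :: real assume e: "0 < e"
  have [measurable]: "f \<in> borel_measurable borel" by (rule excessive_killed_borel_measurable[OF D f])
  have f0: "\<And>y. 0 \<le> f y" and lsc: "lsc_on D f"
    and mean: "\<And>r. 0 < r \<Longrightarrow> cball x r \<subseteq> D \<Longrightarrow> I_alpha \<alpha> r f x \<le> ennreal (f x)"
    using f x unfolding excessive_killed_def by auto
  define \<eta> where "\<eta> = e * \<delta> / 2"
  have \<eta>: "0 < \<eta>" unfolding \<eta>_def using e \<delta> by simp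
  obtain \<rho> where \<rho>: "0 < \<rho>" "\<forall>y\<in>ball x \<rho>. f x - \<eta> < f y"
    using lsc_on_ball_above[OF lsc x, of "f x - \<eta>"] \<eta> by auto
  obtain e0 where e0: "0 < e0" "cball x e0 \<subseteq> D" using D x open_contains_cball by blast
  let ?q = "\<lambda>r. measure (poisson_measure \<alpha> r x) (- ball x \<rho>)"
  have "((\<lambda>r. (f x / \<delta> + 1) * ?q r) \<longlongrightarrow> 0) (at_right 0)"
    using exit_negligible_outside_ball[OF \<alpha> \<rho>(1), of x] unfolding exit_negligible_def
    by (rule tendsto_mult_right_zero)
  then have "\<forall>\<^sub>F r in at_right 0. (f x / \<delta> + 1) * ?q r < e / 2"
    by (rule order_tendstoD(2)) (use e in simp)
  moreover have "\<forall>\<^sub>F r in at_right 0. r \<in> {0<..<e0}"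
    by (rule eventually_at_right_real) (use e0 in simp)
  ultimately show "\<forall>\<^sub>F r in at_right 0. dist (measure (poisson_measure \<alpha> r x) {y. f x + \<delta> \<le> f y}) 0 < e"
  proof eventually_elim
    case (elim r)
    interpret prob_space "poisson_measure \<alpha> r x" by (rule prob_space_poisson_measure[OF \<alpha>]) (use elim in simp)
    have "cball x r \<subseteq> D" using elim e0 by (auto simp: subset_eq)
    then have "(\<integral>\<^sup>+ y. ennreal (f y) \<partial>poisson_measure \<alpha> r x) \<le> ennreal (f x)"
      using mean[of r] elim by (simp add: I_alpha_eq_nn_integral_poisson_measure[OF \<alpha>])
    moreover have "f \<in> borel_measurable (poisson_measure \<alpha> r x)"
      by (subst measurable_cong_sets[OF sets_poisson_measure refl]) measurable
    ultimately have "prob {y \<in> space (poisson_measure \<alpha> r x). f x + \<delta> \<le> f y}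
        \<le> (\<eta> + f x * prob (space (poisson_measure \<alpha> r x) - ball x \<rho>)) / \<delta>
          + prob (space (poisson_measure \<alpha> r x) - ball x \<rho>)"
      using \<rho>(2) f0 \<delta> \<eta> by (intro prob_upper_level_set_le) auto
    then have "measure (poisson_measure \<alpha> r x) {y. f x + \<delta> \<le> f y} \<le> (\<eta> + f x * ?q r) / \<delta> + ?q r"
      by (simp add: Compl_eq_Diff_UNIV)
    also have "\<dots> = e / 2 + (f x / \<delta> + 1) * ?q r"
      unfolding \<eta>_def using \<delta> by (simp add: field_simps)
    also have "\<dots> < e" using elim by linarith
    finally show ?case by simp
  qed
qed

lemma excessive_exit_negligible_level_band:
  fixes x :: "'a::euclidean_space"
  assumes \<alpha>: "0 < \<alpha>" "\<alpha> < 1" and D: "open D" and f: "excessive_killed \<alpha> D f"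
    and x: "x \<in> D" and \<delta>: "0 < \<delta>"
  shows "exit_negligible \<alpha> x {y. \<delta> \<le> \<bar>f y - f x\<bar>}"
proof -
  have [measurable]: "f \<in> borel_measurable borel" by (rule excessive_killed_borel_measurable[OF D f])
  have "lsc_on D f" using f unfolding excessive_killed_def by auto
  then obtain \<rho> where \<rho>: "0 < \<rho>" "\<forall>y\<in>ball x \<rho>. f x - \<delta> < f y"
    using lsc_on_ball_above[OF _ x, of f "f x - \<delta>"] \<delta> by auto
  have "exit_negligible \<alpha> x {y. f y \<le> f x - \<delta>}"
  proof (rule exit_negligible_subset[OF \<alpha> exit_negligible_outside_ball[OF \<alpha> \<rho>(1)]])
    show "{y. f y \<le> f x - \<delta>} \<subseteq> - ball x \<rho>" using \<rho>(2) by force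
  qed simp
  moreover have "exit_negligible \<alpha> x {y. f x + \<delta> \<le> f y}"
    by (rule excessive_exit_negligible_upper_level[OF \<alpha> D f x \<delta>])
  ultimately have "exit_negligible \<alpha> x ({y. f y \<le> f x - \<delta>} \<union> {y. f x + \<delta> \<le> f y})"
    by (rule exit_negligible_Un) measurable
  moreover have "{y. f y \<le> f x - \<delta>} \<union> {y. f x + \<delta> \<le> f y} = {y. \<delta> \<le> \<bar>f y - f x\<bar>}"
    by auto
  ultimately show ?thesis by simp
qed

lemma generate_topology_exit_negligible_nhd:
  fixes x :: "'a::euclidean_space"
  assumes \<alpha>: "0 < \<alpha>" "\<alpha> < 1" and D: "open D" and x: "x \<in> D"
    and T: "generate_topology_on {f -` U | f U. excessive_killed \<alpha> D f \<and> open U} T" "x \<in> T"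
  shows "\<exists>W \<in> sets borel. W \<subseteq> T \<and> exit_negligible \<alpha> x (- W)"
  using T
proof (induction rule: generate_topology_on.induct)
  case (Int S1 S2)
  then obtain W1 W2 where W: "W1 \<in> sets borel" "W1 \<subseteq> S1" "exit_negligible \<alpha> x (- W1)"
    "W2 \<in> sets borel" "W2 \<subseteq> S2" "exit_negligible \<alpha> x (- W2)"
    by auto
  then have "exit_negligible \<alpha> x (- (W1 \<inter> W2))"
    using exit_negligible_Un[of \<alpha> x "- W1" "- W2"] by auto
  then show ?case using W by (intro bexI[of _ "W1 \<inter> W2"]) auto
next
  case (UN K)
  then obtain k where "k \<in> K" "x \<in> k" by auto
  with UN.IH[of k] show ?case by blast
next
  case (Basis s)
  then obtain f U where s: "s = f -` U" and f: "excessive_killed \<alpha> D f" and U: "open U" by auto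
  have [measurable]: "f \<in> borel_measurable borel" by (rule excessive_killed_borel_measurable[OF D f])
  obtain \<delta> where \<delta>: "0 < \<delta>" "ball (f x) \<delta> \<subseteq> U" using U Basis(2) s openE by blast
  define W where "W = {y. \<bar>f y - f x\<bar> < \<delta>}"
  have "W \<subseteq> s" unfolding s W_def using \<delta>(2) by (auto simp: dist_real_def subset_eq)
  moreover have "- W = {y. \<delta> \<le> \<bar>f y - f x\<bar>}" unfolding W_def by auto
  moreover have "W \<in> sets borel" unfolding W_def by measurable
  ultimately show ?case
    using excessive_exit_negligible_level_band[OF \<alpha> D f x \<delta>(1)] by auto
qed simp

lemma topspace_fine_topology: "topspace (fine_topology \<alpha> D) = D"
proof -
  have "excessive_killed \<alpha> D (\<lambda>_. 0)"
    unfolding excessive_killed_def lsc_on_def I_alpha_def by auto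
  then have "UNIV \<in> {f -` U | f U. excessive_killed \<alpha> D f \<and> open U}" by blast
  then have "\<Union>{f -` U | f U. excessive_killed \<alpha> D f \<and> open U} = UNIV" by blast
  then show ?thesis unfolding fine_topology_def by simp
qed

lemma openin_fine_topology_exit_negligible_nhd:
  fixes x :: "'a::euclidean_space"
  assumes \<alpha>: "0 < \<alpha>" "\<alpha> < 1" and D: "open D" and V: "openin (fine_topology \<alpha> D) V" "x \<in> V"
  shows "\<exists>W \<in> sets borel. W \<subseteq> V \<and> exit_negligible \<alpha> x (- W)"
proof -
  obtain T where T: "openin (topology_generated_by {f -` U | f U. excessive_killed \<alpha> D f \<and> open U}) T"
    and VT: "V = T \<inter> D"
    using V(1) unfolding fine_topology_def openin_subtopology by auto
  have x: "x \<in> D" "x \<in> T" using V(2) VT by auto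
  obtain W where W: "W \<in> sets borel" "W \<subseteq> T" "exit_negligible \<alpha> x (- W)"
    using generate_topology_exit_negligible_nhd[OF \<alpha> D x(1) openin_topology_generated_by[OF T] x(2)] by blast
  obtain \<epsilon> where \<epsilon>: "0 < \<epsilon>" "ball x \<epsilon> \<subseteq> D" using D x openE by blast
  have "exit_negligible \<alpha> x (- W \<union> - ball x \<epsilon>)"
    using exit_negligible_Un[OF W(3) exit_negligible_outside_ball[OF \<alpha> \<epsilon>(1)]] W(1) by auto
  then show ?thesis
    using W \<epsilon> VT by (intro bexI[of _ "W \<inter> ball x \<epsilon>"]) auto
qed

section \<open>Convergence of the ball averages\<close>

lemma I_alpha_le_bound:
  fixes x :: "'a::euclidean_space"
  assumes \<alpha>: "0 < \<alpha>" "\<alpha> < 1" and r: "0 < r" and u: "\<And>y. u y \<le> M"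
  shows "I_alpha \<alpha> r u x \<le> ennreal M"
proof -
  interpret prob_space "poisson_measure \<alpha> r x" by (rule prob_space_poisson_measure[OF \<alpha> r])
  have "I_alpha \<alpha> r u x \<le> I_alpha \<alpha> r (\<lambda>_. M) x" by (rule I_alpha_mono[OF \<alpha> u])
  also have "\<dots> = ennreal M"
    using emeasure_space_1 by (simp add: I_alpha_eq_nn_integral_poisson_measure[OF \<alpha>])
  finally show ?thesis .
qed

lemma I_alpha_indicator_combination:
  fixes x :: "'a::euclidean_space"
  assumes \<alpha>: "0 < \<alpha>" "\<alpha> < 1" and r: "0 < r"
    and [measurable]: "S1 \<in> sets borel" "S2 \<in> sets borel" and "0 \<le> c1" "0 \<le> c2"
  shows "I_alpha \<alpha> r (\<lambda>y. c1 * indicator S1 y + c2 * indicator S2 y) x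
    = ennreal (c1 * measure (poisson_measure \<alpha> r x) S1 + c2 * measure (poisson_measure \<alpha> r x) S2)"
proof -
  interpret prob_space "poisson_measure \<alpha> r x" by (rule prob_space_poisson_measure[OF \<alpha> r])
  have "I_alpha \<alpha> r (\<lambda>y. c1 * indicator S1 y + c2 * indicator S2 y) x
      = (\<integral>\<^sup>+ y. ennreal (c1 * indicator S1 y + c2 * indicator S2 y) \<partial>poisson_measure \<alpha> r x)"
    by (rule I_alpha_eq_nn_integral_poisson_measure[OF \<alpha>]) measurable
  also have "\<dots> = ennreal (c1 * prob S1 + c2 * prob S2)"
    by (rule nn_integral_indicator_combination) (use assms in auto)
  finally show ?thesis .
qed

lemma I_alpha_approximation:
  fixes x :: "'a::euclidean_space" and u :: "'a \<Rightarrow> real"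
  assumes \<alpha>: "0 < \<alpha>" "\<alpha> < 1" and r: "0 < r"
    and u: "\<And>y. 0 \<le> u y" "\<And>y. u y \<le> M"
    and W: "W \<in> sets borel" "\<And>y. y \<in> W \<Longrightarrow> \<bar>u y - u x\<bar> \<le> e" and e: "0 \<le> e"
  shows "\<bar>enn2real (I_alpha \<alpha> r u x) - u x\<bar> \<le> e + M * measure (poisson_measure \<alpha> r x) (- W)"
proof -
  interpret prob_space "poisson_measure \<alpha> r x" by (rule prob_space_poisson_measure[OF \<alpha> r])
  define q where "q = prob (- W)"
  have q: "0 \<le> q" "q \<le> 1" "prob W = 1 - q"
    unfolding q_def using prob_compl[of W] W(1) by (auto simp: Compl_eq_Diff_UNIV)
  have M: "0 \<le> M" "u x \<le> M" using u(1)[of x] u(2)[of x] by auto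
  define k where "k = max 0 (u x - e)"
  have k: "0 \<le> k" "u x - e \<le> k" "k \<le> M" unfolding k_def using M e by auto
  have above: "u y \<le> (u x + e) * indicator W y + M * indicator (- W) y" for y
    using W(2)[of y] u(2)[of y] by (cases "y \<in> W") (auto simp: abs_le_iff)
  have below: "k * indicator W y + 0 * indicator (- W) y \<le> u y" for y
    using W(2)[of y] u(1)[of y] by (cases "y \<in> W") (auto simp: abs_le_iff k_def)
  have "I_alpha \<alpha> r u x \<le> I_alpha \<alpha> r (\<lambda>y. (u x + e) * indicator W y + M * indicator (- W) y) x"
    using above by (rule I_alpha_mono[OF \<alpha>])
  also have "\<dots> = ennreal ((u x + e) * (1 - q) + M * q)"
    using W(1) u(1)[of x] e M q by (subst I_alpha_indicator_combination[OF \<alpha> r]) (auto simp: q_def)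
  finally have "I_alpha \<alpha> r u x \<le> ennreal ((u x + e) * (1 - q) + M * q)" .
  then have upper: "enn2real (I_alpha \<alpha> r u x) \<le> (u x + e) * (1 - q) + M * q"
    using u(1)[of x] e M q by (intro enn2real_leI) auto
  have "ennreal (k * (1 - q)) = I_alpha \<alpha> r (\<lambda>y. k * indicator W y + 0 * indicator (- W) y) x"
    using W(1) k q by (subst I_alpha_indicator_combination[OF \<alpha> r]) auto
  also have "\<dots> \<le> I_alpha \<alpha> r u x"
    using below by (rule I_alpha_mono[OF \<alpha>])
  finally have "ennreal (k * (1 - q)) \<le> I_alpha \<alpha> r u x" .
  moreover have "I_alpha \<alpha> r u x < top"
    by (rule le_less_trans[OF I_alpha_le_bound[OF \<alpha> r] ennreal_less_top]) (rule u(2))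
  ultimately have "enn2real (ennreal (k * (1 - q))) \<le> enn2real (I_alpha \<alpha> r u x)"
    by (rule enn2real_mono)
  then have lower: "k * (1 - q) \<le> enn2real (I_alpha \<alpha> r u x)"
    using k q by simp
  have "k * q \<le> M * q" using q k by (intro mult_right_mono) auto
  then have "u x - e - M * q \<le> k * (1 - q)" using k by (simp add: algebra_simps)
  moreover have "(u x + e) * (1 - q) + M * q \<le> u x + e + M * q"
    using q u(1)[of x] e by (simp add: algebra_simps)
  ultimately show ?thesis
    using upper lower unfolding q_def[symmetric] abs_le_iff by linarith
qed

lemma tendsto_I_alpha_of_exit_negligible:
  fixes x :: "'a::euclidean_space" and u :: "'a \<Rightarrow> real"
  assumes \<alpha>: "0 < \<alpha>" "\<alpha> < 1" and u: "\<And>y. 0 \<le> u y" "\<And>y. u y \<le> M"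
    and near: "\<And>e. 0 < e \<Longrightarrow> \<exists>W \<in> sets borel. (\<forall>y\<in>W. \<bar>u y - u x\<bar> < e) \<and> exit_negligible \<alpha> x (- W)"
  shows "((\<lambda>r. I_alpha \<alpha> r u x) \<longlongrightarrow> ennreal (u x)) (at_right 0)"
proof -
  have "((\<lambda>r. enn2real (I_alpha \<alpha> r u x)) \<longlongrightarrow> u x) (at_right 0)"
  proof (rule tendstoI)
    fix e :: real assume e: "0 < e"
    obtain W where W: "W \<in> sets borel" "\<And>y. y \<in> W \<Longrightarrow> \<bar>u y - u x\<bar> \<le> e / 2" "exit_negligible \<alpha> x (- W)"
      using near[of "e / 2"] e by (auto intro: less_imp_le)
    have "((\<lambda>r. M * measure (poisson_measure \<alpha> r x) (- W)) \<longlongrightarrow> 0) (at_right 0)"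
      using W(3) unfolding exit_negligible_def by (rule tendsto_mult_right_zero)
    then have "\<forall>\<^sub>F r in at_right 0. M * measure (poisson_measure \<alpha> r x) (- W) < e / 2"
      by (rule order_tendstoD(2)) (use e in simp)
    then show "\<forall>\<^sub>F r in at_right 0. dist (enn2real (I_alpha \<alpha> r u x)) (u x) < e"
      using eventually_at_right_less[of 0]
    proof eventually_elim
      case (elim r)
      have "\<bar>enn2real (I_alpha \<alpha> r u x) - u x\<bar> \<le> e / 2 + M * measure (poisson_measure \<alpha> r x) (- W)"
        by (rule I_alpha_approximation[OF \<alpha>]) (use elim e u W in auto)
      with elim show ?case by (simp add: dist_real_def)
    qed
  qed
  then have "((\<lambda>r. ennreal (enn2real (I_alpha \<alpha> r u x))) \<longlongrightarrow> ennreal (u x)) (at_right 0)"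
    by (rule tendsto_ennrealI)
  moreover have "\<forall>\<^sub>F r in at_right 0. ennreal (enn2real (I_alpha \<alpha> r u x)) = I_alpha \<alpha> r u x"
    using eventually_at_right_less[of 0]
  proof eventually_elim
    case (elim r)
    have "I_alpha \<alpha> r u x \<le> ennreal M" by (rule I_alpha_le_bound[OF \<alpha> elim]) (rule u(2))
    then have "I_alpha \<alpha> r u x < top" by (rule le_less_trans[OF _ ennreal_less_top])
    then show ?case by simp
  qed
  ultimately show ?thesis by (simp add: tendsto_cong)
qed

theorem lemma7p9:
  fixes D :: "'a::euclidean_space set" and u :: "'a \<Rightarrow> real" and \<alpha> :: real
  assumes "open D"
    and "0 < \<alpha>" and "\<alpha> < 1" and "2 * \<alpha> < real DIM('a)"
    and "\<forall>y. 0 \<le> u y" and "bounded (range u)"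
    and "\<forall>y. y \<notin> D \<longrightarrow> u y = 0"
    and "finely_continuous \<alpha> D u"
  shows "\<forall>x\<in>D. ((\<lambda>r. I_alpha \<alpha> r u x) \<longlongrightarrow> ennreal (u x)) (at_right 0)"
proof
  fix x assume x: "x \<in> D"
  obtain M where M: "\<And>y. u y \<le> M"
    using assms(6) unfolding bounded_real by (meson abs_le_D1 rangeI)
  show "((\<lambda>r. I_alpha \<alpha> r u x) \<longlongrightarrow> ennreal (u x)) (at_right 0)"
  proof (rule tendsto_I_alpha_of_exit_negligible[OF assms(2,3)])
    fix e :: real assume e: "0 < e"
    let ?V = "{y \<in> topspace (fine_topology \<alpha> D). u y \<in> ball (u x) e}"
    have "openin (fine_topology \<alpha> D) ?V"
      using assms(8) unfolding finely_continuous_def by (rule openin_continuous_map_preimage) simp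
    moreover have "x \<in> ?V" using x e by (simp add: topspace_fine_topology)
    ultimately obtain W where "W \<in> sets borel" "W \<subseteq> ?V" "exit_negligible \<alpha> x (- W)"
      using openin_fine_topology_exit_negligible_nhd[OF assms(2,3,1)] by blast
    then show "\<exists>W\<in>sets borel. (\<forall>y\<in>W. \<bar>u y - u x\<bar> < e) \<and> exit_negligible \<alpha> x (- W)"
      by (intro bexI[of _ W]) (auto simp: dist_real_def abs_minus_commute)
  qed (use assms(5) M in auto)
qed

end
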